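(* Consider binary treatments $A\in\{0,1\}$, observed confounders $X\in\mathcal{X}$, unobserved confounders $U\in\mathcal{U}$, and outcomes $Y\in\mathcal{Y}$, and a fixed observational distribution $\mathbb{P}_\mathrm{obs}$ of $(X,A,Y)$. Let $\Gamma$ be a sensitivity parameter. For full distributions $\mathbb{P}$ of $(X,U,A,Y)$, write $\mathbb{P}(a\mid x)$ for the observed treatment probability and define $$\rho(x,u,a)=\frac{1}{1-\mathbb{P}(a\mid x)}\left(\frac{\mathbb{P}(u\mid x)}{\mathbb{P}(u\mid x,a)}-\mathbb{P}(a\mid x)\right),$$ $$\rho(x,u_1,u_2,a)=\frac{\mathbb{P}(u_1\mid x,a)\mathbb{P}(u_2\mid x)-\mathbb{P}(u_1\mid x,a)\mathbb{P}(u_2\mid x,a)\mathbb{P}(a\mid x)}{\mathbb{P}(u_2\mid x,a)\mathbb{P}(u_1\mid x)-\mathbb{P}(u_1\mid x,a)\mathbb{P}(u_2\mid x,a)\mathbb{P}(a\mid x)}.$$ Then the marginal sensitivity model (MSM), every $f$-sensitivity model, and Rosenbaum's sensitivity model, each with sensitivity parameter $\Gamma$, are generalized treatment sensitivity models (GTSMs) with sensitivity parameter $\Gamma$, namely with the following functionals: (i) MSM: $\mathcal{D}_{x,a}(\mathbb{P}(U\mid x),\mathbb{P}(U\mid x,a))=\max\{\sup_{u\in\mathcal{U}}\rho(x,u,a),\ \sup_{u\in\mathcal{U}}\rho(x,u,a)^{-1}\}$; (ii) $f$-sensitivity model: $\mathcal{D}_{x,a}(\mathbb{P}(U\mid x),\mathbb{P}(U\mid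 x,a))=\max\{\int_\mathcal{U} f(\rho(x,u,a))\,\mathbb{P}(u\mid x,a)\,du,\ \int_\mathcal{U} f(\rho(x,u,a)^{-1})\,\mathbb{P}(u\mid x,a)\,du\}$; (iii) Rosenbaum's model: $\mathcal{D}_{x,a}(\mathbb{P}(U\mid x),\mathbb{P}(U\mid x,a))=\max\{\sup_{u_1,u_2\in\mathcal{U}}\rho(x,u_1,u_2,a),\ \sup_{u_1,u_2\in\mathcal{U}}\rho(x,u_1,u_2,a)^{-1}\}$.
   Context: A sensitivity model $\mathcal{M}$ is a family of probability distributions $\mathbb{P}$ on $\mathcal{X}\times\mathcal{U}\times\mathcal{A}\times\mathcal{Y}$ (for arbitrary finite-dimensional $\mathcal{U}$) with $\int_\mathcal{U}\mathbb{P}(x,u,a,y)\,du=\mathbb{P}_\mathrm{obs}(x,a,y)$ for all $\mathbb{P}\in\mathcal{M}$. A GTSM is a sensitivity model containing all $\mathbb{P}$ satisfying $\mathcal{D}_{x,a}(\mathbb{P}(U\mid x),\mathbb{P}(U\mid x,a))\le\Gamma$ for all $x\in\mathcal{X}$, $a\in\mathcal{A}$, where $\mathcal{D}_{x,a}$ is a functional of distributions and $\Gamma\ge0$. Let $\mathrm{OR}(a,b)=\frac{a}{1-a}\frac{1-b}{b}$, $\pi(x)=\mathbb{P}(A=1\mid x)$, $\pi(x,u)=\mathbb{P}(A=1\mid x,u)$. The MSM with parameter $\Gamma\ge1$ is the family of all $\mathbb{P}$ (compatible with $\mathbb{P}_\mathrm{obs}$) with $1/\Gamma\le\mathrm{OR}(\pi(x),\pi(x,u))\le\Gamma$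 for all $x,u$. For a convex $f:\mathbb{R}_{>0}\to\mathbb{R}$ with $f(1)=0$, the $f$-sensitivity model is the family of all $\mathbb{P}$ with $\max\{\int_\mathcal{U} f(\mathrm{OR}(\pi(x),\pi(x,u)))\mathbb{P}(u\mid x,A=1)du,\ \int_\mathcal{U} f(\mathrm{OR}^{-1}(\pi(x),\pi(x,u)))\mathbb{P}(u\mid x,A=1)du\}\le\Gamma$ for all $x$. Rosenbaum's sensitivity model is the family of all $\mathbb{P}$ with $1/\Gamma\le\mathrm{OR}(\pi(x,u_1),\pi(x,u_2))\le\Gamma$ for all $x,u_1,u_2$. Densities are with respect to Lebesgue measure (or probability mass functions for discrete variables). *)

theory Defs
  imports "HOL-Analysis.Analysis"
begin

text \<open>Full distributions of (X,U,A,Y) are given by a joint density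
  p x u a y with respect to MX, MU, counting measure on bool (A), and MY.
  The treatment A is boolean: True = 1, False = 0.\<close>

definition OR :: "real \<Rightarrow> real \<Rightarrow> real" where
  "OR a b = a / (1 - a) * ((1 - b) / b)"

definition dens_xua :: "'y measure \<Rightarrow> ('x \<Rightarrow> 'u \<Rightarrow> bool \<Rightarrow> 'y \<Rightarrow> real) \<Rightarrow> 'x \<Rightarrow> 'u \<Rightarrow> bool \<Rightarrow> real" where
  "dens_xua MY p x u a = enn2real (\<integral>\<^sup>+ y. ennreal (p x u a y) \<partial>MY)"

definition dens_xu :: "'y measure \<Rightarrow> ('x \<Rightarrow> 'u \<Rightarrow> bool \<Rightarrow> 'y \<Rightarrow> real) \<Rightarrow> 'x \<Rightarrow> 'u \<Rightarrow> real" where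
  "dens_xu MY p x u = dens_xua MY p x u True + dens_xua MY p x u False"

definition dens_xa :: "'u measure \<Rightarrow> 'y measure \<Rightarrow> ('x \<Rightarrow> 'u \<Rightarrow> bool \<Rightarrow> 'y \<Rightarrow> real) \<Rightarrow> 'x \<Rightarrow> bool \<Rightarrow> real" where
  "dens_xa MU MY p x a = enn2real (\<integral>\<^sup>+ u. ennreal (dens_xua MY p x u a) \<partial>MU)"

definition dens_x :: "'u measure \<Rightarrow> 'y measure \<Rightarrow> ('x \<Rightarrow> 'u \<Rightarrow> bool \<Rightarrow> 'y \<Rightarrow> real) \<Rightarrow> 'x \<Rightarrow> real" where
  "dens_x MU MY p x = dens_xa MU MY p x True + dens_xa MU MY p x False"

definition cond_u_x :: "'u measure \<Rightarrow> 'y measure \<Rightarrow> ('x \<Rightarrow> 'u \<Rightarrow> bool \<Rightarrow> 'y \<Rightarrow> real) \<Rightarrow> 'x \<Rightarrow> 'u \<Rightarrow> real" where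
  "cond_u_x MU MY p x u = dens_xu MY p x u / dens_x MU MY p x"

definition cond_u_xa :: "'u measure \<Rightarrow> 'y measure \<Rightarrow> ('x \<Rightarrow> 'u \<Rightarrow> bool \<Rightarrow> 'y \<Rightarrow> real) \<Rightarrow> 'x \<Rightarrow> bool \<Rightarrow> 'u \<Rightarrow> real" where
  "cond_u_xa MU MY p x a u = dens_xua MY p x u a / dens_xa MU MY p x a"

definition cond_a_x :: "'u measure \<Rightarrow> 'y measure \<Rightarrow> ('x \<Rightarrow> 'u \<Rightarrow> bool \<Rightarrow> 'y \<Rightarrow> real) \<Rightarrow> 'x \<Rightarrow> bool \<Rightarrow> real" where
  "cond_a_x MU MY p x a = dens_xa MU MY p x a / dens_x MU MY p x"

definition prop_x :: "'u measure \<Rightarrow> 'y measure \<Rightarrow> ('x \<Rightarrow> 'u \<Rightarrow> bool \<Rightarrow> 'y \<Rightarrow> real) \<Rightarrow> 'x \<Rightarrow> real" where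
  "prop_x MU MY p x = cond_a_x MU MY p x True"

definition prop_xu :: "'y measure \<Rightarrow> ('x \<Rightarrow> 'u \<Rightarrow> bool \<Rightarrow> 'y \<Rightarrow> real) \<Rightarrow> 'x \<Rightarrow> 'u \<Rightarrow> real" where
  "prop_xu MY p x u = dens_xua MY p x u True / dens_xu MY p x u"

text \<open>Regular full distributions: a measurable nonnegative joint density of total mass 1,
  all of whose (x,u,a)- and (x,a)-marginal densities are strictly positive and finite,
  so that all conditionals are well defined.\<close>
definition full_dist :: "'x measure \<Rightarrow> 'u measure \<Rightarrow> 'y measure \<Rightarrow> ('x \<Rightarrow> 'u \<Rightarrow> bool \<Rightarrow> 'y \<Rightarrow> real) \<Rightarrow> bool" where
  "full_dist MX MU MY p \<longleftrightarrow>
     (\<forall>x u a y. 0 \<le> p x u a y) \<and>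
     (\<lambda>(x, u, a, y). p x u a y) \<in> borel_measurable (MX \<Otimes>\<^sub>M MU \<Otimes>\<^sub>M count_space UNIV \<Otimes>\<^sub>M MY) \<and>
     (\<integral>\<^sup>+ (x, u, a, y). ennreal (p x u a y) \<partial>(MX \<Otimes>\<^sub>M MU \<Otimes>\<^sub>M count_space UNIV \<Otimes>\<^sub>M MY)) = 1 \<and>
     (\<forall>x\<in>space MX. \<forall>u\<in>space MU. \<forall>a.
        0 < (\<integral>\<^sup>+ y. ennreal (p x u a y) \<partial>MY) \<and> (\<integral>\<^sup>+ y. ennreal (p x u a y) \<partial>MY) < \<infinity>) \<and>
     (\<forall>x\<in>space MX. \<forall>a.
        0 < (\<integral>\<^sup>+ u. ennreal (dens_xua MY p x u a) \<partial>MU) \<and>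
        (\<integral>\<^sup>+ u. ennreal (dens_xua MY p x u a) \<partial>MU) < \<infinity>)"

definition compatible :: "'x measure \<Rightarrow> 'u measure \<Rightarrow> 'y measure \<Rightarrow> ('x \<Rightarrow> bool \<Rightarrow> 'y \<Rightarrow> real)
    \<Rightarrow> ('x \<Rightarrow> 'u \<Rightarrow> bool \<Rightarrow> 'y \<Rightarrow> real) \<Rightarrow> bool" where
  "compatible MX MU MY pobs p \<longleftrightarrow>
     (\<forall>x\<in>space MX. \<forall>a. \<forall>y\<in>space MY. (\<integral>\<^sup>+ u. ennreal (p x u a y) \<partial>MU) = ennreal (pobs x a y))"

definition dists :: "'x measure \<Rightarrow> 'u measure \<Rightarrow> 'y measure \<Rightarrow> ('x \<Rightarrow> bool \<Rightarrow> 'y \<Rightarrow> real)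
    \<Rightarrow> ('x \<Rightarrow> 'u \<Rightarrow> bool \<Rightarrow> 'y \<Rightarrow> real) set" where
  "dists MX MU MY pobs = {p. full_dist MX MU MY p \<and> compatible MX MU MY pobs p}"

definition is_GTSM :: "'x measure \<Rightarrow> 'u measure \<Rightarrow> 'y measure \<Rightarrow> ('x \<Rightarrow> bool \<Rightarrow> 'y \<Rightarrow> real)
    \<Rightarrow> ('x \<Rightarrow> 'u \<Rightarrow> bool \<Rightarrow> 'y \<Rightarrow> real) set
    \<Rightarrow> (('x \<Rightarrow> 'u \<Rightarrow> bool \<Rightarrow> 'y \<Rightarrow> real) \<Rightarrow> 'x \<Rightarrow> bool \<Rightarrow> ereal) \<Rightarrow> real \<Rightarrow> bool" where
  "is_GTSM MX MU MY pobs M D \<Gamma> \<longleftrightarrow>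
     M \<subseteq> dists MX MU MY pobs \<and>
     (\<forall>p\<in>dists MX MU MY pobs. (\<forall>x\<in>space MX. \<forall>a. D p x a \<le> ereal \<Gamma>) \<longrightarrow> p \<in> M)"

definition ext_int :: "'u measure \<Rightarrow> ('u \<Rightarrow> real) \<Rightarrow> ereal" where
  "ext_int M g = enn2ereal (\<integral>\<^sup>+ u. ennreal (g u) \<partial>M) - enn2ereal (\<integral>\<^sup>+ u. ennreal (- g u) \<partial>M)"

definition rho :: "'u measure \<Rightarrow> 'y measure \<Rightarrow> ('x \<Rightarrow> 'u \<Rightarrow> bool \<Rightarrow> 'y \<Rightarrow> real) \<Rightarrow> 'x \<Rightarrow> 'u \<Rightarrow> bool \<Rightarrow> real" where
  "rho MU MY p x u a =
     1 / (1 - cond_a_x MU MY p x a) * (cond_u_x MU MY p x u / cond_u_xa MU MY p x a u - cond_a_x MU MY p x a)"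

definition rho2 :: "'u measure \<Rightarrow> 'y measure \<Rightarrow> ('x \<Rightarrow> 'u \<Rightarrow> bool \<Rightarrow> 'y \<Rightarrow> real) \<Rightarrow> 'x \<Rightarrow> 'u \<Rightarrow> 'u \<Rightarrow> bool \<Rightarrow> real" where
  "rho2 MU MY p x u1 u2 a =
     (cond_u_xa MU MY p x a u1 * cond_u_x MU MY p x u2
        - cond_u_xa MU MY p x a u1 * cond_u_xa MU MY p x a u2 * cond_a_x MU MY p x a) /
     (cond_u_xa MU MY p x a u2 * cond_u_x MU MY p x u1
        - cond_u_xa MU MY p x a u1 * cond_u_xa MU MY p x a u2 * cond_a_x MU MY p x a)"

definition D_msm :: "'u measure \<Rightarrow> 'y measure \<Rightarrow> ('x \<Rightarrow> 'u \<Rightarrow> bool \<Rightarrow> 'y \<Rightarrow> real) \<Rightarrow> 'x \<Rightarrow> bool \<Rightarrow> ereal" where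
  "D_msm MU MY p x a =
     max (SUP u\<in>space MU. ereal (rho MU MY p x u a)) (SUP u\<in>space MU. ereal (inverse (rho MU MY p x u a)))"

definition D_f :: "'u measure \<Rightarrow> 'y measure \<Rightarrow> (real \<Rightarrow> real) \<Rightarrow> ('x \<Rightarrow> 'u \<Rightarrow> bool \<Rightarrow> 'y \<Rightarrow> real) \<Rightarrow> 'x \<Rightarrow> bool \<Rightarrow> ereal" where
  "D_f MU MY f p x a =
     max (ext_int MU (\<lambda>u. f (rho MU MY p x u a) * cond_u_xa MU MY p x a u))
         (ext_int MU (\<lambda>u. f (inverse (rho MU MY p x u a)) * cond_u_xa MU MY p x a u))"

definition D_ros :: "'u measure \<Rightarrow> 'y measure \<Rightarrow> ('x \<Rightarrow> 'u \<Rightarrow> bool \<Rightarrow> 'y \<Rightarrow> real) \<Rightarrow> 'x \<Rightarrow> bool \<Rightarrow> ereal" where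
  "D_ros MU MY p x a =
     max (SUP (u1, u2)\<in>space MU \<times> space MU. ereal (rho2 MU MY p x u1 u2 a))
         (SUP (u1, u2)\<in>space MU \<times> space MU. ereal (inverse (rho2 MU MY p x u1 u2 a)))"

definition MSM :: "'x measure \<Rightarrow> 'u measure \<Rightarrow> 'y measure \<Rightarrow> ('x \<Rightarrow> bool \<Rightarrow> 'y \<Rightarrow> real) \<Rightarrow> real
    \<Rightarrow> ('x \<Rightarrow> 'u \<Rightarrow> bool \<Rightarrow> 'y \<Rightarrow> real) set" where
  "MSM MX MU MY pobs \<Gamma> = {p \<in> dists MX MU MY pobs.
     \<forall>x\<in>space MX. \<forall>u\<in>space MU.
       1 / \<Gamma> \<le> OR (prop_x MU MY p x) (prop_xu MY p x u) \<and> OR (prop_x MU MY p x) (prop_xu MY p x u) \<le> \<Gamma>}"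

definition fSM :: "'x measure \<Rightarrow> 'u measure \<Rightarrow> 'y measure \<Rightarrow> ('x \<Rightarrow> bool \<Rightarrow> 'y \<Rightarrow> real) \<Rightarrow> (real \<Rightarrow> real) \<Rightarrow> real
    \<Rightarrow> ('x \<Rightarrow> 'u \<Rightarrow> bool \<Rightarrow> 'y \<Rightarrow> real) set" where
  "fSM MX MU MY pobs f \<Gamma> = {p \<in> dists MX MU MY pobs.
     \<forall>x\<in>space MX.
       max (ext_int MU (\<lambda>u. f (OR (prop_x MU MY p x) (prop_xu MY p x u)) * cond_u_xa MU MY p x True u))
           (ext_int MU (\<lambda>u. f (inverse (OR (prop_x MU MY p x) (prop_xu MY p x u))) * cond_u_xa MU MY p x True u))
         \<le> ereal \<Gamma>}"

definition RSM :: "'x measure \<Rightarrow> 'u measure \<Rightarrow> 'y measure \<Rightarrow> ('x \<Rightarrow> bool \<Rightarrow> 'y \<Rightarrow> real) \<Rightarrow> real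
    \<Rightarrow> ('x \<Rightarrow> 'u \<Rightarrow> bool \<Rightarrow> 'y \<Rightarrow> real) set" where
  "RSM MX MU MY pobs \<Gamma> = {p \<in> dists MX MU MY pobs.
     \<forall>x\<in>space MX. \<forall>u1\<in>space MU. \<forall>u2\<in>space MU.
       1 / \<Gamma> \<le> OR (prop_xu MY p x u1) (prop_xu MY p x u2) \<and> OR (prop_xu MY p x u1) (prop_xu MY p x u2) \<le> \<Gamma>}"

end

theory Submission
  imports Defs
begin

text \<open>Only the inclusion of the classical models in the GTSMs needs an argument, and only
  for the treatment \<open>a = 1\<close>. By Bayes' rule \<open>P(u | x) / P(u | x, 1) = \<pi>(x) / \<pi>(x, u)\<close>,
  so \<open>\<rho>(x, u, 1)\<close> is exactly the odds ratio \<open>OR(\<pi>(x), \<pi>(x, u))\<close>, and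
  \<open>\<rho>(x, u\<^sub>1, u\<^sub>2, 1) = \<rho>(x, u\<^sub>2, 1) / \<rho>(x, u\<^sub>1, 1) = OR(\<pi>(x, u\<^sub>1), \<pi>(x, u\<^sub>2))\<close>.
  Hence a bound \<open>\<Gamma>\<close> on the functional \<open>D\<^sub>x\<^sub>,\<^sub>1\<close> is literally the defining constraint
  of the respective model.\<close>

lemma is_GTSM_Collect:
  assumes "M = {p \<in> dists MX MU MY pobs. \<forall>x\<in>space MX. P p x}"
    and "\<And>p x. p \<in> dists MX MU MY pobs \<Longrightarrow> x \<in> space MX \<Longrightarrow> D p x True \<le> ereal \<Gamma> \<Longrightarrow> P p x"
  shows "is_GTSM MX MU MY pobs M D \<Gamma>"
  using assms unfolding is_GTSM_def by blast

lemma max_SUP_leD: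
  fixes g h :: "'a \<Rightarrow> 'b::complete_linorder"
  assumes "max (SUP z\<in>A. g z) (SUP z\<in>A. h z) \<le> c" and "z \<in> A"
  shows "g z \<le> c" and "h z \<le> c"
  using assms by (auto intro: order_trans[OF SUP_upper])

lemma ext_int_cong:
  assumes "\<And>u. u \<in> space M \<Longrightarrow> g u = h u"
  shows "ext_int M g = ext_int M h"
  unfolding ext_int_def using assms by (simp cong: nn_integral_cong)

lemma OR_pos:
  fixes a b :: real
  assumes "0 < a" "a < 1" "0 < b" "b < 1"
  shows "0 < OR a b"
  using assms unfolding OR_def by simp

lemma OR_div_OR:
  fixes \<pi> a b :: real
  assumes "0 < \<pi>" "\<pi> < 1" "0 < a" "a < 1"
  shows "OR \<pi> b / OR \<pi> a = OR a b"
proof -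
  have "\<pi> / (1 - \<pi>) \<noteq> 0"
    using assms by simp
  then have "OR \<pi> b / OR \<pi> a = ((1 - b) / b) / ((1 - a) / a)"
    unfolding OR_def by simp
  also have "\<dots> = OR a b"
    unfolding OR_def by (simp add: ac_simps)
  finally show ?thesis .
qed

lemma dists_dens_xua_pos:
  assumes "p \<in> dists MX MU MY pobs" "x \<in> space MX" "u \<in> space MU"
  shows "0 < dens_xua MY p x u a"
  using assms unfolding dists_def full_dist_def dens_xua_def
  by (simp add: enn2real_positive_iff)

lemma dists_dens_xa_pos:
  assumes "p \<in> dists MX MU MY pobs" "x \<in> space MX"
  shows "0 < dens_xa MU MY p x a"
  using assms unfolding dists_def full_dist_def dens_xa_def
  by (simp add: enn2real_positive_iff)

lemma dists_prop_x_bounds: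
  assumes "p \<in> dists MX MU MY pobs" "x \<in> space MX"
  shows "0 < prop_x MU MY p x" and "prop_x MU MY p x < 1"
  using dists_dens_xa_pos[OF assms, of True] dists_dens_xa_pos[OF assms, of False]
  unfolding prop_x_def cond_a_x_def dens_x_def by (simp_all add: field_simps)

lemma dists_prop_xu_bounds:
  assumes "p \<in> dists MX MU MY pobs" "x \<in> space MX" "u \<in> space MU"
  shows "0 < prop_xu MY p x u" and "prop_xu MY p x u < 1"
  using dists_dens_xua_pos[OF assms, of True] dists_dens_xua_pos[OF assms, of False]
  unfolding prop_xu_def dens_xu_def by (simp_all add: field_simps)

lemma dists_cond_u_xa_pos:
  assumes "p \<in> dists MX MU MY pobs" "x \<in> space MX" "u \<in> space MU"
  shows "0 < cond_u_xa MU MY p x a u"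
  using dists_dens_xua_pos[OF assms] dists_dens_xa_pos[OF assms(1,2)]
  unfolding cond_u_xa_def by simp

lemma dists_Bayes:
  assumes "p \<in> dists MX MU MY pobs" "x \<in> space MX" "u \<in> space MU"
  shows "cond_u_x MU MY p x u / cond_u_xa MU MY p x True u = prop_x MU MY p x / prop_xu MY p x u"
  using dists_dens_xua_pos[OF assms, of True] dists_dens_xua_pos[OF assms, of False]
    dists_dens_xa_pos[OF assms(1,2), of True] dists_dens_xa_pos[OF assms(1,2), of False]
  unfolding cond_u_x_def cond_u_xa_def prop_x_def prop_xu_def cond_a_x_def dens_x_def dens_xu_def
  by (simp add: field_simps)

lemma rho_True_eq_OR:
  assumes "p \<in> dists MX MU MY pobs" "x \<in> space MX" "u \<in> space MU"
  shows "rho MU MY p x u True = OR (prop_x MU MY p x) (prop_xu MY p x u)"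
proof -
  have "prop_x MU MY p x < 1" "0 < prop_xu MY p x u"
    using dists_prop_x_bounds[OF assms(1,2)] dists_prop_xu_bounds[OF assms] by auto
  then show ?thesis
    unfolding rho_def dists_Bayes[OF assms] OR_def prop_x_def[symmetric]
    by (simp add: field_simps)
qed

lemma rho2_eq_rho_div_rho:
  assumes "cond_u_xa MU MY p x a u1 \<noteq> 0" "cond_u_xa MU MY p x a u2 \<noteq> 0"
    and "cond_a_x MU MY p x a \<noteq> 1"
  shows "rho2 MU MY p x u1 u2 a = rho MU MY p x u2 a / rho MU MY p x u1 a"
proof -
  let ?c1 = "cond_u_xa MU MY p x a u1" and ?c2 = "cond_u_xa MU MY p x a u2"
    and ?\<pi> = "cond_a_x MU MY p x a"
  have "?c1 * cond_u_x MU MY p x u2 - ?c1 * ?c2 * ?\<pi> = ?c1 * ?c2 * (1 - ?\<pi>) * rho MU MY p x u2 a"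
    "?c2 * cond_u_x MU MY p x u1 - ?c1 * ?c2 * ?\<pi> = ?c1 * ?c2 * (1 - ?\<pi>) * rho MU MY p x u1 a"
    using assms unfolding rho_def by (simp_all add: field_simps)
  moreover have "?c1 * ?c2 * (1 - ?\<pi>) \<noteq> 0"
    using assms by simp
  ultimately show ?thesis
    unfolding rho2_def by simp
qed

lemma rho2_True_eq_OR:
  assumes "p \<in> dists MX MU MY pobs" "x \<in> space MX" "u1 \<in> space MU" "u2 \<in> space MU"
  shows "rho2 MU MY p x u1 u2 True = OR (prop_xu MY p x u1) (prop_xu MY p x u2)"
proof -
  have "rho2 MU MY p x u1 u2 True = rho MU MY p x u2 True / rho MU MY p x u1 True"
    using dists_cond_u_xa_pos[OF assms(1-3), of True] dists_cond_u_xa_pos[OF assms(1,2,4), of True]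
      dists_prop_x_bounds[OF assms(1,2)]
    by (intro rho2_eq_rho_div_rho) (auto simp: prop_x_def)
  then show ?thesis
    using dists_prop_x_bounds[OF assms(1,2)] dists_prop_xu_bounds[OF assms(1-3)]
      dists_prop_xu_bounds[OF assms(1,2,4)]
    by (simp add: rho_True_eq_OR[OF assms(1,2)] assms(3,4) OR_div_OR)
qed

lemma bounds_if_le_and_inverse_le:
  fixes r \<Gamma> :: real
  assumes "0 < r" "r \<le> \<Gamma>" "inverse r \<le> \<Gamma>"
  shows "1 / \<Gamma> \<le> r \<and> r \<le> \<Gamma>"
  using assms le_imp_inverse_le[of "inverse r" \<Gamma>] by (simp add: inverse_eq_divide)

lemma MSM_constraint_if_D_msm_le:
  assumes "p \<in> dists MX MU MY pobs" "x \<in> space MX" "u \<in> space MU"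
    and "D_msm MU MY p x True \<le> ereal \<Gamma>"
  shows "1 / \<Gamma> \<le> OR (prop_x MU MY p x) (prop_xu MY p x u)
       \<and> OR (prop_x MU MY p x) (prop_xu MY p x u) \<le> \<Gamma>"
  using max_SUP_leD[OF assms(4)[unfolded D_msm_def] assms(3)]
    OR_pos[OF dists_prop_x_bounds[OF assms(1,2)] dists_prop_xu_bounds[OF assms(1-3)]]
  by (intro bounds_if_le_and_inverse_le) (simp_all add: rho_True_eq_OR[OF assms(1-3)])

lemma RSM_constraint_if_D_ros_le:
  assumes "p \<in> dists MX MU MY pobs" "x \<in> space MX" "u1 \<in> space MU" "u2 \<in> space MU"
    and "D_ros MU MY p x True \<le> ereal \<Gamma>"
  shows "1 / \<Gamma> \<le> OR (prop_xu MY p x u1) (prop_xu MY p x u2)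
       \<and> OR (prop_xu MY p x u1) (prop_xu MY p x u2) \<le> \<Gamma>"
proof -
  have "(u1, u2) \<in> space MU \<times> space MU"
    using assms(3,4) by simp
  from max_SUP_leD[OF assms(5)[unfolded D_ros_def] this] show ?thesis
    using OR_pos[OF dists_prop_xu_bounds[OF assms(1-3)] dists_prop_xu_bounds[OF assms(1,2,4)]]
    by (intro bounds_if_le_and_inverse_le) (simp_all add: rho2_True_eq_OR[OF assms(1-4)])
qed

lemma fSM_constraint_if_D_f_le:
  assumes "p \<in> dists MX MU MY pobs" "x \<in> space MX"
    and "D_f MU MY f p x True \<le> ereal \<Gamma>"
  shows "max (ext_int MU (\<lambda>u. f (OR (prop_x MU MY p x) (prop_xu MY p x u)) * cond_u_xa MU MY p x True u))
           (ext_int MU (\<lambda>u. f (inverse (OR (prop_x MU MY p x) (prop_xu MY p x u))) * cond_u_xa MU MY p x True u))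
         \<le> ereal \<Gamma>"
  using assms(3) unfolding D_f_def
  by (simp add: rho_True_eq_OR[OF assms(1,2)] cong: ext_int_cong)

theorem lemma1:
  fixes MX :: "'x measure" and MU :: "'u measure" and MY :: "'y measure"
    and pobs :: "'x \<Rightarrow> bool \<Rightarrow> 'y \<Rightarrow> real" and \<Gamma> :: real and f :: "real \<Rightarrow> real"
  shows "(1 \<le> \<Gamma> \<longrightarrow> is_GTSM MX MU MY pobs (MSM MX MU MY pobs \<Gamma>) (D_msm MU MY) \<Gamma>)
       \<and> (convex_on {0<..} f \<and> f 1 = 0 \<and> 0 \<le> \<Gamma> \<longrightarrow>
            is_GTSM MX MU MY pobs (fSM MX MU MY pobs f \<Gamma>) (D_f MU MY f) \<Gamma>)
       \<and> (1 \<le> \<Gamma> \<longrightarrow> is_GTSM MX MU MY pobs (RSM MX MU MY pobs \<Gamma>) (D_ros MU MY) \<Gamma>)"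
proof (intro conjI impI)
  show "is_GTSM MX MU MY pobs (MSM MX MU MY pobs \<Gamma>) (D_msm MU MY) \<Gamma>"
    by (rule is_GTSM_Collect[OF MSM_def]) (simp add: MSM_constraint_if_D_msm_le)
  show "is_GTSM MX MU MY pobs (fSM MX MU MY pobs f \<Gamma>) (D_f MU MY f) \<Gamma>"
    by (rule is_GTSM_Collect[OF fSM_def]) (rule fSM_constraint_if_D_f_le)
  show "is_GTSM MX MU MY pobs (RSM MX MU MY pobs \<Gamma>) (D_ros MU MY) \<Gamma>"
    by (rule is_GTSM_Collect[OF RSM_def]) (simp add: RSM_constraint_if_D_ros_le)
qed

end
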